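(* Let $G=(V_G,E_G)$ be an undirected graph whose vertex set is partitioned among machines $M_1,\dots,M_m$ (every vertex is owned by exactly one machine), and let $G_t$ denote the partition owned by $M_t$. Let $P=(V_P,E_P)$ be a connected undirected query graph. Let $v$ be a data vertex owned by $M_t$ and $u\in V_P$ a query vertex. If $\mathrm{Span}_P(u)\le \mathrm{BD}_{G_t}(v)$, then there is no embedding $f$ of $P$ in $G$ such that $f(u)=v$ and $f(u')$ is not owned by $M_t$ for some $u'\in V_P$ with $u'\neq u$.
   Context: An embedding of $P$ in $G$ is an injective map $f:V_P\to V_G$ such that $(f(u_1),f(u_2))\in E_G$ for every $(u_1,u_2)\in E_P$. A vertex $w$ owned by $M_t$ is a border vertex of $G_t$ if some neighbour of $w$ in $G$ is owned by a machine other than $M_t$; $V^b_{G_t}$ is the set of border vertices of $G_t$. The border distance of $v$ is $\mathrm{BD}_{G_t}(v)=\min_{v'\in V^b_{G_t}} \mathrm{dist}(v,v')$, where $\mathrm{dist}$ is the shortest-path distance in $G$. The span of $u$ is $\mathrm{Span}_P(u)=\max_{u'\in V_P}\mathrm{dist}_P(u,u')$, the maximum shortest-path distance in $P$ from $u$ to any vertex of $P$. *)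

theory Defs
  imports Main "HOL-Library.Extended_Nat"
begin

text \<open>Graphs are given by a vertex set V and an edge relation E (a set of ordered pairs);
  undirectedness is expressed by symmetry of E.\<close>

definition walk :: "('v \<times> 'v) set \<Rightarrow> 'v list \<Rightarrow> bool" where
  "walk E xs \<longleftrightarrow> xs \<noteq> [] \<and> (\<forall>i. Suc i < length xs \<longrightarrow> (xs ! i, xs ! Suc i) \<in> E)"

text \<open>Shortest-path distance (number of edges); infinity if no path exists.\<close>
definition gdist :: "('v \<times> 'v) set \<Rightarrow> 'v \<Rightarrow> 'v \<Rightarrow> enat" where
  "gdist E x y = (INF xs \<in> {xs. walk E xs \<and> hd xs = x \<and> last xs = y}. enat (length xs - 1))"

definition graph_connected :: "'v set \<Rightarrow> ('v \<times> 'v) set \<Rightarrow> bool" where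
  "graph_connected V E \<longleftrightarrow> (\<forall>x\<in>V. \<forall>y\<in>V. gdist E x y < \<infinity>)"

definition embedding ::
  "'u set \<Rightarrow> ('u \<times> 'u) set \<Rightarrow> 'v set \<Rightarrow> ('v \<times> 'v) set \<Rightarrow> ('u \<Rightarrow> 'v) \<Rightarrow> bool" where
  "embedding VP EP VG EG f \<longleftrightarrow> inj_on f VP \<and> f ` VP \<subseteq> VG \<and>
     (\<forall>(u1, u2) \<in> EP. (f u1, f u2) \<in> EG)"

definition border :: "'v set \<Rightarrow> ('v \<times> 'v) set \<Rightarrow> ('v \<Rightarrow> nat) \<Rightarrow> nat \<Rightarrow> 'v set" where
  "border VG EG own t = {w \<in> VG. own w = t \<and> (\<exists>w'. (w, w') \<in> EG \<and> own w' \<noteq> t)}"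

text \<open>Border distance (infinity if there are no border vertices).\<close>
definition border_dist :: "'v set \<Rightarrow> ('v \<times> 'v) set \<Rightarrow> ('v \<Rightarrow> nat) \<Rightarrow> nat \<Rightarrow> 'v \<Rightarrow> enat" where
  "border_dist VG EG own t v = (INF w \<in> border VG EG own t. gdist EG v w)"

definition span :: "'u set \<Rightarrow> ('u \<times> 'u) set \<Rightarrow> 'u \<Rightarrow> enat" where
  "span VP EP u = (SUP u' \<in> VP. gdist EP u u')"

end

theory Submission
  imports Defs
begin

text \<open>Take a shortest path from u to u' in the query graph. Its image under an embedding f is a
  walk in G of the same length, at most Span(u) \<le> BD(v), from v (owned by M_t) to f(u')
  (not owned by M_t). The last vertex of the walk before it first leaves M_t is a border vertex,
  reached from v in fewer steps than the whole walk, so BD(v) is strictly smaller than the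
  walk's length: a contradiction.\<close>

lemma gdist_walk_le:
  assumes "walk E xs"
  shows "gdist E (hd xs) (last xs) \<le> enat (length xs - 1)"
  unfolding gdist_def using assms by (auto intro!: INF_lower2)

lemma gdist_finite_obtains_shortest_walk:
  assumes "gdist E x y < \<infinity>"
  obtains xs where "walk E xs" "hd xs = x" "last xs = y" "gdist E x y = enat (length xs - 1)"
proof -
  let ?W = "{xs. walk E xs \<and> hd xs = x \<and> last xs = y}"
  have "?W \<noteq> {}"
  proof
    assume "?W = {}"
    then have "gdist E x y = \<infinity>"
      unfolding gdist_def by (simp only: \<open>?W = {}\<close> image_empty Inf_empty top_enat_def)
    with assms show False
      by simp
  qed
  then obtain xs where "xs \<in> ?W"
    by blast
  then have "gdist E x y \<in> (\<lambda>xs. enat (length xs - 1)) ` ?W"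
    unfolding gdist_def by (intro wellorder_InfI) blast
  then show thesis
    using that by blast
qed

lemma gdist_le_span: "u' \<in> VP \<Longrightarrow> gdist EP u u' \<le> span VP EP u"
  unfolding span_def by (rule SUP_upper)

lemma walk_map:
  assumes "walk EP xs" "\<forall>(u1, u2) \<in> EP. (f u1, f u2) \<in> EG"
  shows "walk EG (map f xs)"
  using assms unfolding walk_def by auto

lemma walk_take:
  assumes "walk E xs" "0 < j"
  shows "walk E (take j xs)"
  using assms unfolding walk_def by auto

lemma list_crosses_predicate:
  assumes "xs \<noteq> []" "P (hd xs)" "\<not> P (last xs)"
  shows "\<exists>i. Suc i < length xs \<and> P (xs ! i) \<and> \<not> P (xs ! Suc i)"
  using assms
proof (induction xs)
  case Nil
  then show ?case by simp
next
  case (Cons x xs)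
  then have "xs \<noteq> []"
    by auto
  show ?case
  proof (cases "P (hd xs)")
    case True
    with Cons.IH \<open>xs \<noteq> []\<close> Cons.prems(3) obtain i
      where "Suc i < length xs" "P (xs ! i)" "\<not> P (xs ! Suc i)"
      by auto
    then show ?thesis
      by (intro exI[of _ "Suc i"]) simp
  next
    case False
    with Cons.prems(2) \<open>xs \<noteq> []\<close> show ?thesis
      by (intro exI[of _ 0]) (simp add: hd_conv_nth)
  qed
qed

lemma border_dist_less_walk_length:
  assumes "EG \<subseteq> VG \<times> VG" "walk EG ys" "own (hd ys) = t" "own (last ys) \<noteq> t"
  shows "border_dist VG EG own t (hd ys) < enat (length ys - 1)"
proof -
  have "ys \<noteq> []"
    using assms(2) by (simp add: walk_def)
  with assms(3,4) obtain i where i: "Suc i < length ys" "own (ys ! i) = t" "own (ys ! Suc i) \<noteq> t"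
    using list_crosses_predicate[of ys "\<lambda>w. own w = t"] by auto
  have "(ys ! i, ys ! Suc i) \<in> EG"
    using assms(2) i(1) by (simp add: walk_def)
  with assms(1) i have border: "ys ! i \<in> border VG EG own t"
    unfolding border_def by blast
  have prefix: "walk EG (take (Suc i) ys)" "hd (take (Suc i) ys) = hd ys"
    "last (take (Suc i) ys) = ys ! i" "length (take (Suc i) ys) = Suc i"
    using walk_take[OF assms(2)] i(1) \<open>ys \<noteq> []\<close> by (auto simp: last_conv_nth)
  have "border_dist VG EG own t (hd ys) \<le> gdist EG (hd ys) (ys ! i)"
    unfolding border_dist_def using border by (rule INF_lower)
  also have "\<dots> \<le> enat i"
    using gdist_walk_le[OF prefix(1)] prefix(2-4) by simp
  also have "\<dots> < enat (length ys - 1)"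
    using i(1) by simp
  finally show ?thesis .
qed

theorem proposition1:
  fixes VG :: "'v set" and EG :: "('v \<times> 'v) set"
    and VP :: "'u set" and EP :: "('u \<times> 'u) set"
    and own :: "'v \<Rightarrow> nat" and m t :: nat and v :: 'v and u :: 'u
  assumes "finite VG" and "EG \<subseteq> VG \<times> VG" and "sym EG"
    and "\<forall>w\<in>VG. own w \<in> {1..m}"
    and "finite VP" and "EP \<subseteq> VP \<times> VP" and "sym EP"
    and "graph_connected VP EP"
    and "t \<in> {1..m}" and "v \<in> VG" and "own v = t" and "u \<in> VP"
    and "span VP EP u \<le> border_dist VG EG own t v"
  shows "\<not> (\<exists>f. embedding VP EP VG EG f \<and> f u = v \<and>
                (\<exists>u'\<in>VP. u' \<noteq> u \<and> own (f u') \<noteq> t))"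
proof
  assume "\<exists>f. embedding VP EP VG EG f \<and> f u = v \<and>
                (\<exists>u'\<in>VP. u' \<noteq> u \<and> own (f u') \<noteq> t)"
  then obtain f u' where f: "embedding VP EP VG EG f" "f u = v"
    and u': "u' \<in> VP" "own (f u') \<noteq> t"
    by blast
  have "gdist EP u u' < \<infinity>"
    using assms(8,12) u'(1) by (simp add: graph_connected_def)
  then obtain xs where xs: "walk EP xs" "hd xs = u" "last xs = u'"
    and shortest: "gdist EP u u' = enat (length xs - 1)"
    by (rule gdist_finite_obtains_shortest_walk)
  have image: "walk EG (map f xs)"
    using walk_map[OF xs(1)] f(1) by (auto simp: embedding_def)
  with xs f(2) have "hd (map f xs) = v" "last (map f xs) = f u'"
    by (auto simp: walk_def hd_map last_map)
  with image have "border_dist VG EG own t v < gdist EP u u'"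
    using border_dist_less_walk_length[OF assms(2)] assms(11) u'(2) shortest by fastforce
  also have "\<dots> \<le> span VP EP u"
    using u'(1) by (rule gdist_le_span)
  finally show False
    using assms(13) by simp
qed

end
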